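(* Let $\Gamma$ be a connected highly-regular graph with CAM $C=[c_{i,j}]_{1\le i,j\le m}$ and diameter $D=\operatorname{diam}(\Gamma)$, with chosen partitions $V_1(u)=\{u\},\dots,V_m(u)$ for each vertex $u$, and let $S_0,\dots,S_D$ be nonempty subsets of $\{1,\dots,m\}$ with $D_i(u)=\bigsqcup_{t\in S_i}V_t(u)$ for every vertex $u$ and every $i$. For $i\in\{1,\dots,D\}$ define $b_{i-1}^{\max}=\max\{\sum_{t\in S_i}c_{t,l}: l\in S_{i-1}\}$ and $c_i^{\max}=\max\{\sum_{t\in S_{i-1}}c_{t,l}: l\in S_i\}$. Assume $\Gamma$ satisfies: $(\star)$ for every vertex $u$, every $i\in\{0,1,\dots,D-1\}$ and every $x\in D_i(u)$, the set $D_1(x)\cap D_{i+1}(u)$ is nonempty. Then for all integers $i\ge1$, $j\ge 0$ with $i+j\le D$, we have $c_i^{\max}\le b_j^{\max}$.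
   Context: All graphs are finite, simple; $d(u,v)$ is graph distance and $D_i(u)=\{v:d(u,v)=i\}$. A graph $\Gamma$ of order $n$ is highly-regular with collapsed adjacency matrix (CAM) $C=[c_{i,j}]_{1\le i,j\le m}$, where $2\le m<n$ (the value $m=n$ is allowed only when $n=2$), if for every vertex $u$ there is a partition of $V(\Gamma)$ into nonempty sets $V_1(u)=\{u\},V_2(u),\dots,V_m(u)$ such that for all $i,j$, every vertex $y\in V_j(u)$ is adjacent to exactly $c_{i,j}$ vertices of $V_i(u)$. *)

theory Defs
  imports Main
begin

definition simple_graph :: "'a set \<Rightarrow> ('a \<Rightarrow> 'a \<Rightarrow> bool) \<Rightarrow> bool" where
  "simple_graph V E \<longleftrightarrow> finite V \<and>
     (\<forall>x y. E x y \<longrightarrow> x \<in> V \<and> y \<in> V \<and> x \<noteq> y \<and> E y x)"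

definition adj_rel :: "('a \<Rightarrow> 'a \<Rightarrow> bool) \<Rightarrow> ('a \<times> 'a) set" where
  "adj_rel E = {(x, y). E x y}"

definition gdist :: "('a \<Rightarrow> 'a \<Rightarrow> bool) \<Rightarrow> 'a \<Rightarrow> 'a \<Rightarrow> nat" where
  "gdist E u v = (LEAST n. (u, v) \<in> (adj_rel E) ^^ n)"

definition connected_graph :: "'a set \<Rightarrow> ('a \<Rightarrow> 'a \<Rightarrow> bool) \<Rightarrow> bool" where
  "connected_graph V E \<longleftrightarrow> (\<forall>u\<in>V. \<forall>v\<in>V. \<exists>n. (u, v) \<in> (adj_rel E) ^^ n)"

definition diam :: "'a set \<Rightarrow> ('a \<Rightarrow> 'a \<Rightarrow> bool) \<Rightarrow> nat" where
  "diam V E = Max {gdist E u v | u v. u \<in> V \<and> v \<in> V}"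

definition Dset :: "'a set \<Rightarrow> ('a \<Rightarrow> 'a \<Rightarrow> bool) \<Rightarrow> 'a \<Rightarrow> nat \<Rightarrow> 'a set" where
  "Dset V E u i = {v \<in> V. gdist E u v = i}"

definition highly_regular ::
  "'a set \<Rightarrow> ('a \<Rightarrow> 'a \<Rightarrow> bool) \<Rightarrow> nat \<Rightarrow> (nat \<Rightarrow> nat \<Rightarrow> nat) \<Rightarrow> ('a \<Rightarrow> nat \<Rightarrow> 'a set) \<Rightarrow> bool" where
  "highly_regular V E m c P \<longleftrightarrow> simple_graph V E \<and>
     2 \<le> m \<and> (m < card V \<or> (m = card V \<and> card V = 2)) \<and>
     (\<forall>u\<in>V. P u 1 = {u} \<and>
        (\<forall>i\<in>{1..m}. P u i \<noteq> {}) \<and>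
        (\<forall>i\<in>{1..m}. \<forall>j\<in>{1..m}. i \<noteq> j \<longrightarrow> P u i \<inter> P u j = {}) \<and>
        (\<Union>i\<in>{1..m}. P u i) = V \<and>
        (\<forall>i\<in>{1..m}. \<forall>j\<in>{1..m}. \<forall>y\<in>P u j. card {x \<in> P u i. E x y} = c i j))"

definition bmax :: "(nat \<Rightarrow> nat \<Rightarrow> nat) \<Rightarrow> (nat \<Rightarrow> nat set) \<Rightarrow> nat \<Rightarrow> nat" where
  "bmax c S j = Max {\<Sum>t\<in>S (j + 1). c t l | l. l \<in> S j}"

definition cmax :: "(nat \<Rightarrow> nat \<Rightarrow> nat) \<Rightarrow> (nat \<Rightarrow> nat set) \<Rightarrow> nat \<Rightarrow> nat" where
  "cmax c S i = Max {\<Sum>t\<in>S (i - 1). c t l | l. l \<in> S i}"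

end

theory Submission
  imports Defs
begin

text \<open>Pick l in S_i attaining c_i^max and a vertex w in V_l(v); then w has exactly c_i^max
  neighbours in D_(i-1)(v). Iterating (\<star>) walks from w outwards to a vertex u in D_(i+j)(v) with
  d(w,u) = j, so w lies on a geodesic from v to u, and the triangle inequality puts every
  neighbour of w in D_(i-1)(v) into D_(j+1)(u). Since w lies in V_l'(u) for some l' in S_j, it has
  exactly the sum of c_(t,l') over t in S_(j+1) neighbours there, which is at most b_j^max.\<close>

lemma simple_graph_edgeD:
  "simple_graph V E \<Longrightarrow> E x y \<Longrightarrow> x \<in> V \<and> y \<in> V \<and> x \<noteq> y \<and> E y x"
  unfolding simple_graph_def by blast

lemma relpow_adj_rel_sym:
  assumes "simple_graph V E" "(x, y) \<in> adj_rel E ^^ n"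
  shows "(y, x) \<in> adj_rel E ^^ n"
  using assms(2)
proof (induction n arbitrary: y)
  case (Suc n)
  then obtain z where "(x, z) \<in> adj_rel E ^^ n" "E z y"
    by (auto simp: adj_rel_def)
  with Suc.IH simple_graph_edgeD[OF assms(1)] show ?case
    by (metis adj_rel_def case_prodI mem_Collect_eq relpow_Suc_I2)
qed simp

lemma gdist_le: "(u, v) \<in> adj_rel E ^^ n \<Longrightarrow> gdist E u v \<le> n"
  unfolding gdist_def by (rule Least_le)

lemma gdist_relpow:
  assumes "connected_graph V E" "u \<in> V" "v \<in> V"
  shows "(u, v) \<in> adj_rel E ^^ gdist E u v"
proof -
  obtain n where "(u, v) \<in> adj_rel E ^^ n"
    using assms unfolding connected_graph_def by blast
  then show ?thesis unfolding gdist_def by (rule LeastI)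
qed

lemma gdist_triangle:
  assumes "connected_graph V E" "u \<in> V" "v \<in> V" "w \<in> V"
  shows "gdist E u w \<le> gdist E u v + gdist E v w"
  using gdist_relpow[OF assms(1,2,3)] gdist_relpow[OF assms(1,3,4)]
  by (intro gdist_le) (auto simp: relpow_add)

lemma gdist_commute:
  assumes "simple_graph V E" "connected_graph V E" "u \<in> V" "v \<in> V"
  shows "gdist E u v = gdist E v u"
  using gdist_le[OF relpow_adj_rel_sym[OF assms(1) gdist_relpow[OF assms(2,3,4)]]]
    gdist_le[OF relpow_adj_rel_sym[OF assms(1) gdist_relpow[OF assms(2,4,3)]]]
  by simp

lemma gdist_eq_0_iff:
  assumes "connected_graph V E" "u \<in> V" "v \<in> V"
  shows "gdist E u v = 0 \<longleftrightarrow> u = v"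
proof
  assume "gdist E u v = 0"
  then show "u = v" using gdist_relpow[OF assms] by simp
qed (metis gdist_le le_zero_eq relpow_0_I)

lemma gdist_eq_1_iff:
  assumes "simple_graph V E" "connected_graph V E" "u \<in> V" "v \<in> V"
  shows "gdist E u v = 1 \<longleftrightarrow> E u v"
proof
  assume "gdist E u v = 1"
  then show "E u v" using gdist_relpow[OF assms(2,3,4)] by (simp add: adj_rel_def)
next
  assume uv: "E u v"
  then have "gdist E u v \<le> 1" by (intro gdist_le) (simp add: adj_rel_def)
  moreover have "u \<noteq> v" using simple_graph_edgeD[OF assms(1) uv] by blast
  then have "gdist E u v \<noteq> 0" using gdist_eq_0_iff[OF assms(2,3,4)] by blast
  ultimately show "gdist E u v = 1" by simp
qed

lemma exists_outward_vertex:
  assumes sg: "simple_graph V E" and conn: "connected_graph V E"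
    and star: "\<forall>u\<in>V. \<forall>k < diam V E. \<forall>x\<in>Dset V E u k.
                 Dset V E x 1 \<inter> Dset V E u (k + 1) \<noteq> {}"
    and u: "u \<in> V" and x: "x \<in> Dset V E u k" and kn: "k + n \<le> diam V E"
  shows "\<exists>y\<in>Dset V E u (k + n). gdist E x y = n"
proof -
  have "\<exists>y\<in>Dset V E u (k + n). (x, y) \<in> adj_rel E ^^ n"
    using kn
  proof (induction n)
    case 0
    then show ?case using x by auto
  next
    case (Suc n)
    then obtain y where y: "y \<in> Dset V E u (k + n)" "(x, y) \<in> adj_rel E ^^ n"
      by auto
    then obtain z where z: "z \<in> Dset V E y 1" "z \<in> Dset V E u (k + n + 1)"
      using star u Suc.prems by (metis add_Suc_right disjoint_iff less_eq_Suc_le)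
    then have "E y z"
      using gdist_eq_1_iff[OF sg conn] y(1) by (auto simp: Dset_def)
    with y(2) z(2) show ?case by (auto simp: adj_rel_def)
  qed
  then obtain y where y: "y \<in> Dset V E u (k + n)" and walk: "(x, y) \<in> adj_rel E ^^ n"
    by blast
  from walk have "gdist E x y \<le> n" by (rule gdist_le)
  moreover have "gdist E u y \<le> gdist E u x + gdist E x y"
    using x y by (intro gdist_triangle[OF conn u]) (simp_all add: Dset_def)
  ultimately show ?thesis using x y by (auto simp: Dset_def)
qed

lemma neighbours_on_geodesic:
  assumes sg: "simple_graph V E" and conn: "connected_graph V E"
    and V: "u \<in> V" "v \<in> V" "w \<in> V"
    and geodesic: "gdist E v u = gdist E v w + gdist E w u"
  shows "{x \<in> Dset V E v (gdist E v w - 1). E x w} \<subseteq> Dset V E u (gdist E w u + 1)"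
proof safe
  fix x assume x: "x \<in> Dset V E v (gdist E v w - 1)" "E x w"
  have xV: "x \<in> V" using x(1) by (simp add: Dset_def)
  have "gdist E w x = 1"
    using gdist_eq_1_iff[OF sg conn] simple_graph_edgeD[OF sg x(2)] by blast
  moreover have "gdist E v w \<noteq> 0"
  proof
    assume "gdist E v w = 0"
    then have "v = w" "gdist E v x = 0" using gdist_eq_0_iff[OF conn V(2,3)] x(1)
      by (auto simp: Dset_def)
    then show False using gdist_eq_0_iff[OF conn V(2) xV] simple_graph_edgeD[OF sg x(2)] by blast
  qed
  moreover have "gdist E u x \<le> gdist E u w + gdist E w x"
    using gdist_triangle[OF conn V(1,3) xV] .
  moreover have "gdist E v u \<le> gdist E v x + gdist E x u"
    using gdist_triangle[OF conn V(2) xV V(1)] .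
  ultimately have "gdist E u x = gdist E w u + 1"
    using x(1) geodesic gdist_commute[OF sg conn] V xV by (auto simp: Dset_def)
  then show "x \<in> Dset V E u (gdist E w u + 1)" using xV by (simp add: Dset_def)
qed

lemma sum_collapsed_adjacency_eq_card:
  assumes hr: "highly_regular V E m c P" and v: "v \<in> V" and T: "T \<subseteq> {1..m}"
    and l: "l \<in> {1..m}" and y: "y \<in> P v l"
  shows "(\<Sum>t\<in>T. c t l) = card {x \<in> (\<Union>t\<in>T. P v t). E x y}"
proof -
  have fin: "finite V" using hr unfolding highly_regular_def simple_graph_def by blast
  have part: "\<forall>t\<in>{1..m}. P v t \<subseteq> V"
    "\<forall>i\<in>{1..m}. \<forall>j\<in>{1..m}. i \<noteq> j \<longrightarrow> P v i \<inter> P v j = {}"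
    "\<forall>i\<in>{1..m}. \<forall>j\<in>{1..m}. \<forall>y\<in>P v j. card {x \<in> P v i. E x y} = c i j"
    using hr v unfolding highly_regular_def by blast+
  have "(\<Sum>t\<in>T. c t l) = (\<Sum>t\<in>T. card {x \<in> P v t. E x y})"
    using part(3) T l y by (intro sum.cong refl) (metis subsetD)
  also have "\<dots> = card (\<Union>t\<in>T. {x \<in> P v t. E x y})"
  proof (rule card_UN_disjoint[symmetric])
    show "finite T" using T by (rule finite_subset) simp
    show "\<forall>t\<in>T. finite {x \<in> P v t. E x y}"
      using T part(1) fin by (metis (no_types) finite_Collect_conjI finite_subset Collect_mem_eq subsetD)
    show "\<forall>t\<in>T. \<forall>t'\<in>T. t \<noteq> t' \<longrightarrow> {x \<in> P v t. E x y} \<inter> {x \<in> P v t'. E x y} = {}"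
      using T part(2) by blast
  qed
  also have "(\<Union>t\<in>T. {x \<in> P v t. E x y}) = {x \<in> (\<Union>t\<in>T. P v t). E x y}" by blast
  finally show ?thesis .
qed

lemma sum_layer_eq_card_neighbours:
  assumes hr: "highly_regular V E m c P"
    and S_sub: "\<forall>k \<le> diam V E. S k \<noteq> {} \<and> S k \<subseteq> {1..m}"
    and S_D: "\<forall>u\<in>V. \<forall>k \<le> diam V E. Dset V E u k = (\<Union>t\<in>S k. P u t)"
    and k: "k \<le> diam V E" and v: "v \<in> V" and l: "l \<in> {1..m}" and y: "y \<in> P v l"
  shows "(\<Sum>t\<in>S k. c t l) = card {x \<in> Dset V E v k. E x y}"
proof -
  have T: "S k \<subseteq> {1..m}" using S_sub k by blast
  have "Dset V E v k = (\<Union>t\<in>S k. P v t)" using S_D v k by blast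
  then show ?thesis using sum_collapsed_adjacency_eq_card[OF hr v T l y] by simp
qed

lemma cmax_attained_at_vertex:
  assumes hr: "highly_regular V E m c P"
    and S_sub: "\<forall>k \<le> diam V E. S k \<noteq> {} \<and> S k \<subseteq> {1..m}"
    and S_D: "\<forall>u\<in>V. \<forall>k \<le> diam V E. Dset V E u k = (\<Union>t\<in>S k. P u t)"
    and i: "i \<le> diam V E"
  obtains v w where "v \<in> V" "w \<in> Dset V E v i"
    "cmax c S i = card {x \<in> Dset V E v (i - 1). E x w}"
proof -
  have Si: "S i \<noteq> {}" "S i \<subseteq> {1..m}" using S_sub i by blast+
  then have "cmax c S i \<in> {\<Sum>t\<in>S (i - 1). c t l | l. l \<in> S i}"
    unfolding cmax_def using finite_subset[OF Si(2)] by (intro Max_in) auto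
  then obtain l where l: "l \<in> S i" and cmax_l: "cmax c S i = (\<Sum>t\<in>S (i - 1). c t l)"
    by blast
  have lm: "l \<in> {1..m}" using l Si(2) by blast
  have "V \<noteq> {}" using hr unfolding highly_regular_def by auto
  then obtain v where v: "v \<in> V" by blast
  have "P v l \<noteq> {}" using hr v lm unfolding highly_regular_def by blast
  then obtain w where w: "w \<in> P v l" by blast
  show ?thesis
  proof (rule that[OF v])
    show "w \<in> Dset V E v i" using S_D v i l w by blast
    show "cmax c S i = card {x \<in> Dset V E v (i - 1). E x w}"
      using cmax_l sum_layer_eq_card_neighbours[OF hr S_sub S_D _ v lm w] i by simp
  qed
qed

lemma card_neighbours_le_bmax:
  assumes hr: "highly_regular V E m c P"
    and S_sub: "\<forall>k \<le> diam V E. S k \<noteq> {} \<and> S k \<subseteq> {1..m}"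
    and S_D: "\<forall>u\<in>V. \<forall>k \<le> diam V E. Dset V E u k = (\<Union>t\<in>S k. P u t)"
    and j: "j + 1 \<le> diam V E" and u: "u \<in> V" and w: "w \<in> Dset V E u j"
  shows "card {x \<in> Dset V E u (j + 1). E x w} \<le> bmax c S j"
proof -
  have "Dset V E u j = (\<Union>t\<in>S j. P u t)" using S_D u j by simp
  then obtain l where l: "l \<in> S j" "w \<in> P u l" using w by blast
  have Sj: "S j \<subseteq> {1..m}" using S_sub j by simp
  have "card {x \<in> Dset V E u (j + 1). E x w} = (\<Sum>t\<in>S (j + 1). c t l)"
    using sum_layer_eq_card_neighbours[OF hr S_sub S_D j u _ l(2)] l(1) Sj by auto
  also have "\<dots> \<le> bmax c S j"
    unfolding bmax_def using l(1) finite_subset[OF Sj] by (intro Max_ge) auto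
  finally show ?thesis .
qed

theorem proposition6p2:
  fixes V :: "'a set" and E :: "'a \<Rightarrow> 'a \<Rightarrow> bool" and m :: nat
    and c :: "nat \<Rightarrow> nat \<Rightarrow> nat" and P :: "'a \<Rightarrow> nat \<Rightarrow> 'a set"
    and S :: "nat \<Rightarrow> nat set" and i j :: nat
  assumes hr: "highly_regular V E m c P"
    and conn: "connected_graph V E"
    and S_sub: "\<forall>k \<le> diam V E. S k \<noteq> {} \<and> S k \<subseteq> {1..m}"
    and S_D: "\<forall>u\<in>V. \<forall>k \<le> diam V E. Dset V E u k = (\<Union>t\<in>S k. P u t)"
    and star: "\<forall>u\<in>V. \<forall>k < diam V E. \<forall>x\<in>Dset V E u k.
                 Dset V E x 1 \<inter> Dset V E u (k + 1) \<noteq> {}"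
    and i1: "1 \<le> i" and ij: "i + j \<le> diam V E"
  shows "cmax c S i \<le> bmax c S j"
proof -
  have sg: "simple_graph V E" using hr unfolding highly_regular_def by blast
  then have fin: "finite V" unfolding simple_graph_def by blast
  obtain v w where v: "v \<in> V" and wD: "w \<in> Dset V E v i"
    and cmax_w: "cmax c S i = card {x \<in> Dset V E v (i - 1). E x w}"
    using cmax_attained_at_vertex[OF hr S_sub S_D] ij by (metis add_leD1)
  then obtain u where uD: "u \<in> Dset V E v (i + j)" and wu: "gdist E w u = j"
    using exists_outward_vertex[OF sg conn star v _ ij] by blast
  have V: "u \<in> V" "w \<in> V" and geodesic: "gdist E v u = gdist E v w + gdist E w u"
    using uD wD wu by (auto simp: Dset_def)
  have "cmax c S i \<le> card {x \<in> Dset V E u (j + 1). E x w}"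
    unfolding cmax_w using neighbours_on_geodesic[OF sg conn V(1) v V(2) geodesic] wD wu fin
    by (intro card_mono) (auto simp: Dset_def)
  also have "\<dots> \<le> bmax c S j"
  proof (rule card_neighbours_le_bmax[OF hr S_sub S_D _ V(1)])
    show "j + 1 \<le> diam V E" using ij i1 by simp
    show "w \<in> Dset V E u j" using gdist_commute[OF sg conn V] wu V(2) by (simp add: Dset_def)
  qed
  finally show ?thesis .
qed

end
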